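(* Let $\mathbb{T}\in\mathrm{Tr}(2\times\mathbb{N})$. The system $\{z_\eta:\eta\in 2^{<\mathbb{N}}\setminus\{\emptyset\}\}$ is a $1$-unconditional shrinking basis of $E_{\mathbb{T}}$.
   Context: Trees: a tree on $\Lambda$ is a subset of $\Lambda^{<\mathbb{N}}$ closed under initial segments; $[T]$ denotes its infinite branches; elements of a tree on $2\times\mathbb{N}$ are pairs $(\sigma,\nu)$ of sequences of equal length; for $\sigma\in2^{\mathbb{N}}$, $\mathbb{T}(\sigma)=\{\nu\in\mathbb{N}^{<\mathbb{N}}:(\sigma|_{|\nu|},\nu)\in\mathbb{T}\}$. For $\nu=(n_1,\dots,n_k)$ (or infinite) let $\tilde\nu=\{n_1,n_1+n_2,\dots\}$, and for $T\in\mathrm{Tr}(\mathbb{N})$ let $\mathcal{M}_T=\{\tilde\nu:\nu\in T\cup[T]\text{ or }|\nu|\le3\}$. For a compact family $\mathcal{M}$ of subsets of $\mathbb{N}$, $\|\cdot\|_{\mathcal{M}}$ is the norm on $c_{00}$ given as the Minkowski gauge of the smallest absolutely convex $\Theta_{\mathcal{M}}\subset c_{00}$ containing all $e_i=\mathbf{1}_{\{i\}}$ and such that $\frac12\sum_k\mathbf{1}_{E_k}x_k\in\Theta_{\mathcal{M}}$ whenever $x_k\in\Theta_{\mathcal{M}}$ and $E_1<\dots<E_n$ are finite sets for which some element of $\mathcal{M}$ contains $m_1,\dots,m_n$ with $m_1\le E_1<m_2\le E_2<\dots<m_n\le E_n$. $E_{\mathbb{T}}$ is the completion of $c_{00}(2^{<\mathbb{N}}\setminus\{\emptyset\})$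 under $\|x\|_{\mathbb{T}}=\sup_{\sigma\in2^{\mathbb{N}}}\|\sum_{\ell\ge1}x(\sigma|_\ell)e_\ell\|_{\mathcal{M}_{\mathbb{T}(\sigma)}}$, and $z_\eta=\mathbf{1}_{\{\eta\}}$. A basis is $1$-unconditional if $\|\sum_{A}a_ix_i\|\le\|\sum_Ba_ix_i\|$ for finite $A\subset B$; shrinking if the dual functionals span a dense subspace of the dual. *)

theory Defs
  imports "HOL-Analysis.Analysis"
begin

text \<open>Here the natural numbers of the paper are the positive integers (so that
  nu-tilde is a strictly increasing enumeration). The binary alphabet 2 is bool.\<close>

definition tree2N :: "(bool list \<times> nat list) set \<Rightarrow> bool" where
  "tree2N T \<longleftrightarrow>
     (\<forall>s \<nu>. (s, \<nu>) \<in> T \<longrightarrow> length s = length \<nu> \<and> (\<forall>n\<in>set \<nu>. 1 \<le> n)) \<and>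
     (\<forall>s \<nu> k. (s, \<nu>) \<in> T \<longrightarrow> (take k s, take k \<nu>) \<in> T)"

definition Tsec :: "(bool list \<times> nat list) set \<Rightarrow> (nat \<Rightarrow> bool) \<Rightarrow> nat list set" where
  "Tsec T \<sigma> = {\<nu>. (map \<sigma> [0..<length \<nu>], \<nu>) \<in> T}"

definition branches :: "nat list set \<Rightarrow> (nat \<Rightarrow> nat) set" where
  "branches S = {\<nu>. \<forall>k. map \<nu> [0..<k] \<in> S}"

definition tilde_fin :: "nat list \<Rightarrow> nat set" where
  "tilde_fin \<nu> = {sum_list (take k \<nu>) | k. 1 \<le> k \<and> k \<le> length \<nu>}"

definition tilde_inf :: "(nat \<Rightarrow> nat) \<Rightarrow> nat set" where
  "tilde_inf \<nu> = {(\<Sum>i<k. \<nu> i) | k. 1 \<le> k}"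

definition MT :: "nat list set \<Rightarrow> nat set set" where
  "MT S = tilde_fin ` S \<union> tilde_inf ` branches S
          \<union> tilde_fin ` {\<nu>. length \<nu> \<le> 3 \<and> (\<forall>n\<in>set \<nu>. 1 \<le> n)}"

text \<open>Theta_M: the smallest absolutely convex subset of c00(N) containing the unit
  vectors e_i (i in N) and closed under the operation
  (x_k)_k, (E_k)_k |-> 1/2 sum_k 1_{E_k} x_k for M-admissible E_1 < ... < E_n.
  Absolute convexity is expressed by closure under a x + b y with |a|+|b| <= 1.\<close>
inductive_set Theta :: "nat set set \<Rightarrow> (nat \<Rightarrow> real) set" for M :: "nat set set" where
  unit: "1 \<le> i \<Longrightarrow> (\<lambda>j. if j = i then 1 else 0) \<in> Theta M"
| absconv: "x \<in> Theta M \<Longrightarrow> y \<in> Theta M \<Longrightarrow> \<bar>a\<bar> + \<bar>b\<bar> \<le> 1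
            \<Longrightarrow> (\<lambda>j. a * x j + b * y j) \<in> Theta M"
| comb: "\<forall>p\<in>set ps. snd p \<in> Theta M \<Longrightarrow>
         \<forall>p\<in>set ps. finite (fst p) \<and> fst p \<noteq> {} \<Longrightarrow>
         F \<in> M \<Longrightarrow> length ms = length ps \<Longrightarrow> set ms \<subseteq> F \<Longrightarrow>
         \<forall>k<length ps. ms ! k \<le> Min (fst (ps ! k)) \<Longrightarrow>
         \<forall>k. Suc k < length ps \<longrightarrow> Max (fst (ps ! k)) < ms ! Suc k \<Longrightarrow>
         (\<lambda>j. (1/2) * (\<Sum>k<length ps. if j \<in> fst (ps ! k) then snd (ps ! k) j else 0))
           \<in> Theta M"

definition normM :: "nat set set \<Rightarrow> (nat \<Rightarrow> real) \<Rightarrow> real" where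
  "normM M x = Inf {t. 0 < t \<and> (\<lambda>j. x j / t) \<in> Theta M}"

definition c00T :: "(bool list \<Rightarrow> real) set" where
  "c00T = {x. finite {\<eta>. x \<eta> \<noteq> 0} \<and> x [] = 0}"

definition normT :: "(bool list \<times> nat list) set \<Rightarrow> (bool list \<Rightarrow> real) \<Rightarrow> real" where
  "normT T x = (SUP \<sigma>\<in>(UNIV :: (nat \<Rightarrow> bool) set).
      normM (MT (Tsec T \<sigma>)) (\<lambda>l. if 1 \<le> l then x (map \<sigma> [0..<l]) else 0))"

definition zvec :: "bool list \<Rightarrow> bool list \<Rightarrow> real" where
  "zvec \<eta> = (\<lambda>\<xi>. if \<xi> = \<eta> then 1 else 0)"

definition schauder_basis :: "(nat \<Rightarrow> 'a::banach) \<Rightarrow> bool" where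
  "schauder_basis b \<longleftrightarrow>
     (\<forall>x. \<exists>!a::nat \<Rightarrow> real. (\<lambda>n. \<Sum>i<n. a i *\<^sub>R b i) \<longlonglongrightarrow> x)"

definition basis_coef :: "(nat \<Rightarrow> 'a::banach) \<Rightarrow> nat \<Rightarrow> 'a \<Rightarrow> real" where
  "basis_coef b n x = (THE a::nat \<Rightarrow> real. (\<lambda>m. \<Sum>i<m. a i *\<^sub>R b i) \<longlonglongrightarrow> x) n"

definition shrinking :: "(nat \<Rightarrow> 'a::banach) \<Rightarrow> bool" where
  "shrinking b \<longleftrightarrow> (\<forall>n. bounded_linear (basis_coef b n)) \<and>
     closure (span (range (\<lambda>n. Blinfun (basis_coef b n)))) = (UNIV :: ('a \<Rightarrow>\<^sub>L real) set)"

definition one_unconditional :: "('i \<Rightarrow> 'a::real_normed_vector) \<Rightarrow> 'i set \<Rightarrow> bool" where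
  "one_unconditional z I \<longleftrightarrow>
     (\<forall>A B (a::'i \<Rightarrow> real). finite B \<longrightarrow> A \<subseteq> B \<longrightarrow> B \<subseteq> I \<longrightarrow>
        norm (\<Sum>i\<in>A. a i *\<^sub>R z i) \<le> norm (\<Sum>i\<in>B. a i *\<^sub>R z i))"

end

theory Submission
  imports Defs
begin

text \<open>Restricting a vector to a set of nodes restricts every branch vector to a set of levels,
  and the gauge of \<open>\<Theta>\<^sub>M\<close> can only decrease under such restrictions (induction over
  \<open>\<Theta>\<^sub>M\<close>). This gives 1-unconditionality and, by density, contractive basis projections,
  hence a Schauder basis. For shrinking: every \<open>\<M>\<^sub>T\<close> contains all sets of at most three
  integers, so three successive blocks of norm at most \<open>c\<close> add up to norm at most \<open>2c\<close>. If a
  functional \<open>F\<close> did not become uniformly small on the tails of the basis, there would be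
  arbitrarily far-out blocks of norm \<open>1\<close> with \<open>F \<ge> \<delta>\<close>; adding them in threes \<open>j\<close> times
  produces blocks of norm \<open>\<le> 2\<^sup>j\<close> with \<open>F \<ge> 3\<^sup>j \<delta>\<close>, contradicting boundedness of \<open>F\<close>.\<close>

section \<open>The gauge of \<open>\<Theta>\<^sub>M\<close>\<close>

definition supp :: "('b \<Rightarrow> real) \<Rightarrow> 'b set" where
  "supp v = {j. v j \<noteq> 0}"

text \<open>Index \<open>0\<close> is outside the paper's \<open>\<nat>\<close>, hence \<open>v 0 = 0\<close>.\<close>
definition c00N :: "(nat \<Rightarrow> real) set" where
  "c00N = {v. finite (supp v) \<and> v 0 = 0}"

definition gauge_set :: "nat set set \<Rightarrow> (nat \<Rightarrow> real) \<Rightarrow> real set" where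
  "gauge_set M v = {t. 0 < t \<and> (\<lambda>j. v j / t) \<in> Theta M}"

lemma Theta_zero: "(\<lambda>j. 0) \<in> Theta M"
  using Theta.absconv[OF Theta.unit[of 1] Theta.unit[of 1], of 0 0] by simp

lemma Theta_scale: "x \<in> Theta M \<Longrightarrow> \<bar>c\<bar> \<le> 1 \<Longrightarrow> (\<lambda>j. c * x j) \<in> Theta M"
  using Theta.absconv[of x M x c 0] by simp

lemma successive_Max_less_Min:
  assumes "\<forall>k<n. ms ! k \<le> Min (E k)" "\<forall>k. Suc k < n \<longrightarrow> Max (E k) < ms ! Suc k"
    and "\<forall>k<n. finite (E k) \<and> E k \<noteq> {}"
    and "k < k'" "k' < n"
  shows "Max (E k) < Min (E k')"
  using assms(4,5)
proof (induction k')
  case 0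
  then show ?case by simp
next
  case (Suc k'')
  show ?case
  proof (cases "k = k''")
    case True
    then show ?thesis using assms(1,2) Suc.prems by force
  next
    case False
    have fin: "finite (E k'')" "E k'' \<noteq> {}" using assms(3) Suc.prems by auto
    have "Max (E k) < Min (E k'')" using Suc False by simp
    also have "\<dots> \<le> Max (E k'')" using Min_le[OF fin(1) Max_in[OF fin]] .
    also have "\<dots> < ms ! Suc k''" using assms(2) Suc.prems by simp
    also have "\<dots> \<le> Min (E (Suc k''))" using assms(1) Suc.prems by simp
    finally show ?thesis .
  qed
qed

lemma card_successive_sets_containing_le_one:
  assumes "\<forall>k<n. ms ! k \<le> Min (E k)" "\<forall>k. Suc k < n \<longrightarrow> Max (E k) < ms ! Suc k"
    and fin: "\<forall>k<n. finite (E k) \<and> E k \<noteq> {}"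
  shows "card {k. k < n \<and> j \<in> E k} \<le> 1"
proof -
  have not_both: False if "k < k'" "k' < n" "j \<in> E k" "j \<in> E k'" for k k'
  proof -
    have "Max (E k) < Min (E k')" using successive_Max_less_Min[OF assms that(1,2)] .
    moreover have "j \<le> Max (E k)" "Min (E k') \<le> j" using that fin by auto
    ultimately show False using le_less_trans[of j "Max (E k)" "Min (E k')"] by simp
  qed
  have "k = k'" if "k < n \<and> j \<in> E k" "k' < n \<and> j \<in> E k'" for k k'
    using not_both[of k k'] not_both[of k' k] that by (cases k k' rule: linorder_cases) auto
  then show ?thesis unfolding One_nat_def by (subst card_le_Suc0_iff_eq) auto
qed

lemma Theta_abs_le_one: "x \<in> Theta M \<Longrightarrow> \<bar>x j\<bar> \<le> 1"
proof (induction x rule: Theta.induct)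
  case (unit i)
  then show ?case by simp
next
  case (absconv x y a b)
  have "\<bar>a * x j + b * y j\<bar> \<le> \<bar>a\<bar> * \<bar>x j\<bar> + \<bar>b\<bar> * \<bar>y j\<bar>"
    by (simp add: abs_mult[symmetric] abs_triangle_ineq)
  also have "\<dots> \<le> \<bar>a\<bar> * 1 + \<bar>b\<bar> * 1"
    using absconv by (intro add_mono mult_left_mono) auto
  finally show ?case using absconv by simp
next
  case (comb ps F ms)
  define E where "E k = fst (ps ! k)" for k
  have fin: "\<forall>k<length ps. finite (E k) \<and> E k \<noteq> {}"
    using comb(2) nth_mem unfolding E_def by blast
  have "\<forall>k<length ps. ms ! k \<le> Min (E k)" "\<forall>k. Suc k < length ps \<longrightarrow> Max (E k) < ms ! Suc k"
    using comb(6,7) unfolding E_def .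
  \<comment> \<open>the sets \<open>E k\<close> are successive, so \<open>j\<close> lies in at most one of them\<close>
  then have card_le: "card {k. k < length ps \<and> j \<in> E k} \<le> 1"
    using fin by (rule card_successive_sets_containing_le_one)
  have "\<bar>\<Sum>k<length ps. if j \<in> fst (ps ! k) then snd (ps ! k) j else 0\<bar>
      \<le> (\<Sum>k<length ps. if j \<in> E k then 1 else 0)"
    using comb(1) unfolding E_def
    by (intro order_trans[OF sum_abs] sum_mono) (auto dest: nth_mem)
  also have "\<dots> = real (card {k. k < length ps \<and> j \<in> E k})"
    by (simp add: sum.If_cases Int_def conj_commute)
  finally show ?case using card_le by simp
qed

lemma Theta_restrict: "x \<in> Theta M \<Longrightarrow> (\<lambda>j. if j \<in> G then x j else 0) \<in> Theta M"
proof (induction x rule: Theta.induct)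
  case (unit i)
  show ?case
  proof (cases "i \<in> G")
    case True
    then have "(\<lambda>j. if j \<in> G then (if j = i then 1 else 0) else 0::real) = (\<lambda>j. if j = i then 1 else 0)"
      by auto
    then show ?thesis using Theta.unit[OF unit] by simp
  next
    case False
    then have "(\<lambda>j. if j \<in> G then (if j = i then 1 else 0) else 0::real) = (\<lambda>j. 0)"
      by auto
    then show ?thesis using Theta_zero by simp
  qed
next
  case (absconv x y a b)
  have "(\<lambda>j. if j \<in> G then a * x j + b * y j else 0)
     = (\<lambda>j. a * (if j \<in> G then x j else 0) + b * (if j \<in> G then y j else 0))" by auto
  then show ?case using Theta.absconv[OF absconv(4,5,3)] by simp
next
  case (comb ps F ms)
  define ps' where "ps' = map (\<lambda>p. (fst p, \<lambda>j. if j \<in> G then snd p j else 0)) ps"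
  have "(\<lambda>j. (1/2) * (\<Sum>k<length ps'. if j \<in> fst (ps' ! k) then snd (ps' ! k) j else 0))
    \<in> Theta M"
    by (rule Theta.comb[of _ _ F ms]) (use comb in \<open>auto simp: ps'_def in_set_conv_nth\<close>)
  moreover have "(\<lambda>j. (1/2) * (\<Sum>k<length ps'. if j \<in> fst (ps' ! k) then snd (ps' ! k) j else 0))
    = (\<lambda>j. if j \<in> G
           then (1/2) * (\<Sum>k<length ps. if j \<in> fst (ps ! k) then snd (ps ! k) j else 0) else 0)"
    by (auto simp: ps'_def fun_eq_iff intro!: sum.cong sum.neutral)
  ultimately show ?case by simp
qed

lemma Theta_if_l1_le_one:
  assumes "finite S" "S \<subseteq> {1..}" "\<forall>j. j \<notin> S \<longrightarrow> v j = 0" "(\<Sum>j\<in>S. \<bar>v j\<bar>) \<le> 1"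
  shows "v \<in> Theta M"
  using assms
proof (induction S arbitrary: v rule: finite_induct)
  case empty
  then have "v = (\<lambda>j. 0)" by auto
  then show ?case using Theta_zero by simp
next
  case (insert i S)
  define s where "s = (\<Sum>j\<in>S. \<bar>v j\<bar>)"
  have s_nonneg: "s \<ge> 0" unfolding s_def by (simp add: sum_nonneg)
  have total: "\<bar>v i\<bar> + s \<le> 1" using insert unfolding s_def by simp
  have unit_i: "(\<lambda>j. if j = i then 1 else 0) \<in> Theta M" using insert(4) by (intro Theta.unit) auto
  show ?case
  proof (cases "s = 0")
    case True
    then have "\<forall>j\<in>S. v j = 0" unfolding s_def using insert(1)
      by (simp add: sum_nonneg_eq_0_iff)
    then have "v = (\<lambda>j. v i * (if j = i then 1 else 0) + 0 * (if j = i then 1 else 0))"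
      using insert(5) by (auto simp: fun_eq_iff)
    then show ?thesis using Theta.absconv[OF unit_i unit_i, of "v i" 0] total True by simp
  next
    case False
    then have s_pos: "s > 0" using s_nonneg by simp
    define w where "w j = (if j \<in> S then v j / s else 0)" for j
    have "(\<Sum>j\<in>S. \<bar>w j\<bar>) = (\<Sum>j\<in>S. \<bar>v j\<bar> / s)"
      unfolding w_def using s_pos by (intro sum.cong) auto
    also have "\<dots> = 1" using s_pos unfolding s_def by (simp add: sum_divide_distrib[symmetric])
    finally have "w \<in> Theta M"
      using insert.IH[of w] insert.prems(1) unfolding w_def by simp
    moreover have "v = (\<lambda>j. v i * (if j = i then 1 else 0) + s * w j)"
      using insert(2,5) s_pos unfolding w_def by (auto simp: fun_eq_iff)
    ultimately show ?thesis using Theta.absconv[OF unit_i, of w "v i" s] total s_nonneg by simp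
  qed
qed

lemma normM_eq_Inf_gauge_set: "normM M v = Inf (gauge_set M v)"
  unfolding normM_def gauge_set_def by simp

lemma bdd_below_gauge_set: "bdd_below (gauge_set M v)"
  unfolding gauge_set_def by (rule bdd_belowI[of _ 0]) auto

lemma gauge_set_if_l1_le:
  assumes "v \<in> c00N" "t > 0" "(\<Sum>j\<in>supp v. \<bar>v j\<bar>) \<le> t"
  shows "t \<in> gauge_set M v"
proof -
  have "supp v \<subseteq> {1..}"
    using assms(1) unfolding c00N_def supp_def by (auto simp: Suc_le_eq) (metis gr0I)
  moreover have "(\<Sum>j\<in>supp v. \<bar>v j / t\<bar>) \<le> 1"
    using assms(2,3) by (simp add: sum_divide_distrib[symmetric])
  ultimately have "(\<lambda>j. v j / t) \<in> Theta M"
    using assms(1) by (intro Theta_if_l1_le_one[of "supp v"]) (auto simp: c00N_def supp_def)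
  then show ?thesis using assms(2) unfolding gauge_set_def by simp
qed

lemma gauge_set_nonempty: "v \<in> c00N \<Longrightarrow> gauge_set M v \<noteq> {}"
  using gauge_set_if_l1_le[of v "(\<Sum>j\<in>supp v. \<bar>v j\<bar>) + 1" M]
  by (force simp: sum_nonneg add_nonneg_pos)

lemma gauge_set_upward: "s \<in> gauge_set M v \<Longrightarrow> s \<le> t \<Longrightarrow> t \<in> gauge_set M v"
proof -
  assume s: "s \<in> gauge_set M v" and "s \<le> t"
  then have "s > 0" "(\<lambda>j. v j / s) \<in> Theta M" unfolding gauge_set_def by auto
  then have "(\<lambda>j. (s / t) * (v j / s)) \<in> Theta M" using \<open>s \<le> t\<close> by (intro Theta_scale) auto
  then show ?thesis using \<open>s > 0\<close> \<open>s \<le> t\<close> unfolding gauge_set_def by simp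
qed

lemma abs_le_normM: "v \<in> c00N \<Longrightarrow> \<bar>v j\<bar> \<le> normM M v"
  unfolding normM_eq_Inf_gauge_set
proof (rule cInf_greatest)
  fix t assume "t \<in> gauge_set M v"
  then have "t > 0" "\<bar>v j / t\<bar> \<le> 1"
    using Theta_abs_le_one[of "\<lambda>j. v j / t" M j] unfolding gauge_set_def by auto
  then show "\<bar>v j\<bar> \<le> t" by (simp add: abs_divide divide_le_eq)
qed (rule gauge_set_nonempty)

lemma normM_nonneg: "v \<in> c00N \<Longrightarrow> 0 \<le> normM M v"
  using abs_le_normM[of v 0 M] by simp

lemma normM_le_l1: "v \<in> c00N \<Longrightarrow> normM M v \<le> (\<Sum>j\<in>supp v. \<bar>v j\<bar>)"
proof (rule dense_ge)
  fix t assume v: "v \<in> c00N" and t: "(\<Sum>j\<in>supp v. \<bar>v j\<bar>) < t"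
  then have "t \<in> gauge_set M v"
    by (intro gauge_set_if_l1_le) (auto intro: le_less_trans[OF sum_nonneg])
  then show "normM M v \<le> t"
    unfolding normM_eq_Inf_gauge_set by (rule cInf_lower[OF _ bdd_below_gauge_set])
qed

lemma Theta_if_normM_less: "v \<in> c00N \<Longrightarrow> normM M v < t \<Longrightarrow> (\<lambda>j. v j / t) \<in> Theta M"
  using cInf_lessD[OF gauge_set_nonempty, of v M t] gauge_set_upward
  unfolding normM_eq_Inf_gauge_set gauge_set_def by fastforce

lemma normM_restrict_le: "v \<in> c00N \<Longrightarrow> normM M (\<lambda>j. if j \<in> G then v j else 0) \<le> normM M v"
  unfolding normM_eq_Inf_gauge_set[of M v]
proof (rule cInf_greatest)
  fix t assume "t \<in> gauge_set M v"
  then have "t > 0" "(\<lambda>j. if j \<in> G then v j / t else 0) \<in> Theta M"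
    using Theta_restrict unfolding gauge_set_def by auto
  then have "t \<in> gauge_set M (\<lambda>j. if j \<in> G then v j else 0)"
    unfolding gauge_set_def by (simp add: if_distrib[of "\<lambda>x. x / t"] cong: if_cong)
  then show "normM M (\<lambda>j. if j \<in> G then v j else 0) \<le> t"
    unfolding normM_eq_Inf_gauge_set by (rule cInf_lower[OF _ bdd_below_gauge_set])
qed (rule gauge_set_nonempty)

definition supp_less :: "('b::linorder \<Rightarrow> real) \<Rightarrow> ('b \<Rightarrow> real) \<Rightarrow> bool" where
  "supp_less v w \<longleftrightarrow> (\<forall>a\<in>supp v. \<forall>b\<in>supp w. a < b)"

text \<open>The consecutive differences \<open>\<nu> = [a, b - a, c - b]\<close> of \<open>a < b < c\<close> satisfy
  \<open>tilde_fin \<nu> = {a, b, c}\<close>.\<close>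
lemma tilde_fin_covers_three:
  assumes "sorted_wrt (<) ms" "0 \<notin> set ms" "length ms \<le> 3"
  shows "\<exists>\<nu>. length \<nu> \<le> 3 \<and> (\<forall>n\<in>set \<nu>. 1 \<le> n) \<and> set ms \<subseteq> tilde_fin \<nu>"
proof -
  consider "ms = []" | a where "ms = [a]" | a b where "ms = [a, b]"
    | a b c where "ms = [a, b, c]"
    using assms(3) by (cases ms; cases "tl ms"; cases "tl (tl ms)"; auto)
  then show ?thesis
  proof cases
    case 1
    then show ?thesis by (intro exI[of _ "[]"]) auto
  next
    case (2 a)
    have "a \<in> tilde_fin [a]" unfolding tilde_fin_def by (intro CollectI exI[of _ 1]) simp
    then show ?thesis using 2 assms by (intro exI[of _ "[a]"]) auto
  next
    case (3 a b)
    have "a \<in> tilde_fin [a, b - a]" unfolding tilde_fin_def by (intro CollectI exI[of _ 1]) simp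
    moreover have "b \<in> tilde_fin [a, b - a]"
      unfolding tilde_fin_def using 3 assms by (intro CollectI exI[of _ 2]) simp
    ultimately show ?thesis using 3 assms by (intro exI[of _ "[a, b - a]"]) auto
  next
    case (4 a b c)
    have "a \<in> tilde_fin [a, b - a, c - b]"
      unfolding tilde_fin_def by (intro CollectI exI[of _ 1]) simp
    moreover have "b \<in> tilde_fin [a, b - a, c - b]"
      unfolding tilde_fin_def using 4 assms by (intro CollectI exI[of _ 2]) simp
    moreover have "c \<in> tilde_fin [a, b - a, c - b]"
      unfolding tilde_fin_def using 4 assms by (intro CollectI exI[of _ 3]) simp
    ultimately show ?thesis using 4 assms by (intro exI[of _ "[a, b - a, c - b]"]) auto
  qed
qed

lemma MT_covers_small_sets:
  assumes "finite A" "card A \<le> 3" "0 \<notin> A"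
  shows "\<exists>F\<in>MT S. A \<subseteq> F"
proof -
  obtain \<nu> where "length \<nu> \<le> 3" "\<forall>n\<in>set \<nu>. 1 \<le> n" "A \<subseteq> tilde_fin \<nu>"
    using tilde_fin_covers_three[of "sorted_list_of_set A"] assms
    by (auto simp: strict_sorted_list_of_set)
  then show ?thesis unfolding MT_def by blast
qed

lemma Theta_half_sum_successive:
  assumes cover: "\<And>A. finite A \<Longrightarrow> card A \<le> 3 \<Longrightarrow> 0 \<notin> A \<Longrightarrow> \<exists>F\<in>M. A \<subseteq> F"
    and vs: "\<forall>v\<in>set vs. v \<in> Theta M \<and> v \<in> c00N \<and> supp v \<noteq> {}"
    and sorted: "sorted_wrt supp_less vs" and len: "length vs \<le> 3"
  shows "(\<lambda>j. (1/2) * sum_list (map (\<lambda>v. v j) vs)) \<in> Theta M"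
proof -
  define ps where "ps = map (\<lambda>v. (supp v, v)) vs"
  define ms where "ms = map (\<lambda>v. Min (supp v)) vs"
  have fin: "finite (supp v)" "supp v \<noteq> {}" if "v \<in> set vs" for v
    using vs that unfolding c00N_def by auto
  have Max_less_Min: "Max (supp v) < Min (supp w)" if "v \<in> set vs" "w \<in> set vs" "supp_less v w" for v w
    using that fin Min_in Max_in unfolding supp_less_def by blast
  have sorted_ms: "sorted_wrt (<) ms"
    unfolding ms_def sorted_wrt_map
    by (rule sorted_wrt_mono_rel[OF _ sorted]) (meson Max_less_Min fin Min_le Max_in le_less_trans)
  have "card (set ms) \<le> 3"
    using sorted_ms len distinct_card[of ms] by (simp add: strict_sorted_iff ms_def)
  moreover have "0 \<notin> set ms"
    unfolding ms_def using vs fin Min_in unfolding c00N_def supp_def by fastforce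
  ultimately obtain F where F: "F \<in> M" "set ms \<subseteq> F"
    using cover[of "set ms"] by blast
  have "(\<lambda>j. (1/2) * (\<Sum>k<length ps. if j \<in> fst (ps ! k) then snd (ps ! k) j else 0)) \<in> Theta M"
  proof (rule Theta.comb[OF _ _ F(1) _ F(2)])
    show "\<forall>k. Suc k < length ps \<longrightarrow> Max (fst (ps ! k)) < ms ! Suc k"
      using sorted_wrt_nth_less[OF sorted] Max_less_Min unfolding ps_def ms_def by simp
  qed (use vs fin in \<open>auto simp: ps_def ms_def\<close>)
  moreover have "(\<Sum>k<length ps. if j \<in> fst (ps ! k) then snd (ps ! k) j else 0)
      = sum_list (map (\<lambda>v. v j) vs)" for j
    unfolding ps_def sum_list_sum_nth atLeast0LessThan
    by (intro sum.cong) (auto simp: supp_def)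
  ultimately show ?thesis by simp
qed

lemma normM_add_three_successive_le:
  assumes cover: "\<And>A. finite A \<Longrightarrow> card A \<le> 3 \<Longrightarrow> 0 \<notin> A \<Longrightarrow> \<exists>F\<in>M. A \<subseteq> F"
    and v: "v1 \<in> c00N" "v2 \<in> c00N" "v3 \<in> c00N"
    and succ: "supp_less v1 v2" "supp_less v2 v3" "supp_less v1 v3"
    and bound: "normM M v1 \<le> c" "normM M v2 \<le> c" "normM M v3 \<le> c"
  shows "normM M (\<lambda>j. v1 j + v2 j + v3 j) \<le> 2 * c"
proof -
  have "normM M (\<lambda>j. v1 j + v2 j + v3 j) / 2 \<le> c"
  proof (rule dense_ge)
    fix t assume "c < t"
    have t: "t > 0" using normM_nonneg[OF v(1), of M] bound(1) \<open>c < t\<close> by linarith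
    define w1 where "w1 j = v1 j / t" for j
    define w2 where "w2 j = v2 j / t" for j
    define w3 where "w3 j = v3 j / t" for j
    have Theta_w: "w1 \<in> Theta M" "w2 \<in> Theta M" "w3 \<in> Theta M"
      unfolding w1_def w2_def w3_def using Theta_if_normM_less v bound \<open>c < t\<close>
      by (meson le_less_trans)+
    have supp_w: "supp w1 = supp v1" "supp w2 = supp v2" "supp w3 = supp v3"
      unfolding w1_def w2_def w3_def supp_def using t by auto
    \<comment> \<open>zero blocks are dropped: \<open>Theta.comb\<close> only combines nonempty sets\<close>
    define vs where "vs = filter (\<lambda>w. supp w \<noteq> {}) [w1, w2, w3]"
    have Theta_half_sum: "(\<lambda>j. (1/2) * sum_list (map (\<lambda>v. v j) vs)) \<in> Theta M"
    proof (rule Theta_half_sum_successive[OF cover])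
      show "\<forall>v\<in>set vs. v \<in> Theta M \<and> v \<in> c00N \<and> supp v \<noteq> {}"
        using Theta_w supp_w v unfolding vs_def c00N_def by (auto simp: w1_def w2_def w3_def)
      show "sorted_wrt supp_less vs"
        unfolding vs_def by (rule sorted_wrt_filter) (use succ supp_w in \<open>simp add: supp_less_def\<close>)
    qed (simp_all add: vs_def)
    have filter_sum: "sum_list (map (\<lambda>v. v j) vs) = w1 j + w2 j + w3 j" for j
      unfolding vs_def by (subst sum_list_map_filter) (auto simp: supp_def)
    have "(1/2) * sum_list (map (\<lambda>v. v j) vs) = (v1 j + v2 j + v3 j) / (2 * t)" for j
      unfolding filter_sum w1_def w2_def w3_def using t by (simp add: field_simps)
    then have "(\<lambda>j. (1/2) * sum_list (map (\<lambda>v. v j) vs)) = (\<lambda>j. (v1 j + v2 j + v3 j) / (2 * t))"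
      by (rule ext)
    then have "(\<lambda>j. (v1 j + v2 j + v3 j) / (2 * t)) \<in> Theta M"
      using Theta_half_sum by (simp only:)
    then have "2 * t \<in> gauge_set M (\<lambda>j. v1 j + v2 j + v3 j)"
      unfolding gauge_set_def using t by simp
    then have "normM M (\<lambda>j. v1 j + v2 j + v3 j) \<le> 2 * t"
      unfolding normM_eq_Inf_gauge_set by (rule cInf_lower[OF _ bdd_below_gauge_set])
    then show "normM M (\<lambda>j. v1 j + v2 j + v3 j) / 2 \<le> t" by simp
  qed
  then show ?thesis by simp
qed

section \<open>The norm of \<open>E\<^sub>T\<close>\<close>

definition branch_vec :: "(nat \<Rightarrow> bool) \<Rightarrow> (bool list \<Rightarrow> real) \<Rightarrow> nat \<Rightarrow> real" where
  "branch_vec \<sigma> x = (\<lambda>l. if 1 \<le> l then x (map \<sigma> [0..<l]) else 0)"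

definition levels_less :: "(bool list \<Rightarrow> real) \<Rightarrow> (bool list \<Rightarrow> real) \<Rightarrow> bool" where
  "levels_less x y \<longleftrightarrow> (\<forall>\<eta>\<in>supp x. \<forall>\<xi>\<in>supp y. length \<eta> < length \<xi>)"

lemma normT_eq_SUP_branch_vec: "normT T x = (SUP \<sigma>. normM (MT (Tsec T \<sigma>)) (branch_vec \<sigma> x))"
  unfolding normT_def branch_vec_def by simp

lemma inj_prefixes: "inj (\<lambda>l. map \<sigma> [0..<l])"
  by (rule injI) (metis diff_zero length_map length_upt)

lemma finite_supp_if_c00T: "x \<in> c00T \<Longrightarrow> finite (supp x)"
  unfolding c00T_def supp_def by simp

lemma supp_branch_vec: "supp (branch_vec \<sigma> x) \<subseteq> (\<lambda>l. map \<sigma> [0..<l]) -` supp x"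
  unfolding supp_def branch_vec_def by auto

lemma branch_vec_in_c00N: "x \<in> c00T \<Longrightarrow> branch_vec \<sigma> x \<in> c00N"
  unfolding c00N_def
  using finite_subset[OF supp_branch_vec finite_vimageI[OF finite_supp_if_c00T inj_prefixes]]
  by (simp add: branch_vec_def)

lemma l1_branch_vec_le:
  assumes "x \<in> c00T"
  shows "(\<Sum>l\<in>supp (branch_vec \<sigma> x). \<bar>branch_vec \<sigma> x l\<bar>) \<le> (\<Sum>\<eta>\<in>supp x. \<bar>x \<eta>\<bar>)"
proof -
  let ?pre = "\<lambda>l. map \<sigma> [0..<l]"
  have "(\<Sum>l\<in>supp (branch_vec \<sigma> x). \<bar>branch_vec \<sigma> x l\<bar>) = (\<Sum>l\<in>supp (branch_vec \<sigma> x). \<bar>x (?pre l)\<bar>)"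
    by (intro sum.cong) (auto simp: supp_def branch_vec_def)
  also have "\<dots> = (\<Sum>\<eta>\<in>?pre ` supp (branch_vec \<sigma> x). \<bar>x \<eta>\<bar>)"
    using sum.reindex[OF inj_on_subset[OF inj_prefixes subset_UNIV], of "\<lambda>\<eta>. \<bar>x \<eta>\<bar>"]
    by (simp add: o_def)
  also have "\<dots> \<le> (\<Sum>\<eta>\<in>supp x. \<bar>x \<eta>\<bar>)"
    by (rule sum_mono2[OF finite_supp_if_c00T[OF assms]]) (use supp_branch_vec in auto)
  finally show ?thesis .
qed

lemma bdd_above_branch_norms:
  "x \<in> c00T \<Longrightarrow> bdd_above (range (\<lambda>\<sigma>. normM (MT (Tsec T \<sigma>)) (branch_vec \<sigma> x)))"
  by (rule bdd_aboveI[of _ "\<Sum>\<eta>\<in>supp x. \<bar>x \<eta>\<bar>"])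
     (use normM_le_l1 branch_vec_in_c00N l1_branch_vec_le order_trans in blast)

lemma normM_branch_vec_le_normT:
  "x \<in> c00T \<Longrightarrow> normM (MT (Tsec T \<sigma>)) (branch_vec \<sigma> x) \<le> normT T x"
  unfolding normT_eq_SUP_branch_vec by (rule cSUP_upper[OF _ bdd_above_branch_norms]) auto

lemma abs_le_normT:
  assumes "x \<in> c00T"
  shows "\<bar>x \<eta>\<bar> \<le> normT T x"
proof -
  define \<sigma> where "\<sigma> i = (if i < length \<eta> then \<eta> ! i else False)" for i
  have \<eta>: "map \<sigma> [0..<length \<eta>] = \<eta>" by (rule nth_equalityI) (auto simp: \<sigma>_def)
  have "\<bar>x \<eta>\<bar> \<le> normM (MT (Tsec T \<sigma>)) (branch_vec \<sigma> x)"
  proof (cases "\<eta> = []")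
    case True
    then show ?thesis using assms normM_nonneg[OF branch_vec_in_c00N] unfolding c00T_def by simp
  next
    case False
    then have "branch_vec \<sigma> x (length \<eta>) = x \<eta>" using \<eta> by (simp add: branch_vec_def Suc_le_eq)
    then show ?thesis using abs_le_normM[OF branch_vec_in_c00N[OF assms]] by metis
  qed
  also have "\<dots> \<le> normT T x" by (rule normM_branch_vec_le_normT[OF assms])
  finally show ?thesis .
qed

lemma c00T_restrict: "x \<in> c00T \<Longrightarrow> (\<lambda>\<eta>. if \<eta> \<in> G then x \<eta> else 0) \<in> c00T"
  unfolding c00T_def by (auto elim: finite_subset[rotated])

lemma c00T_add: "x \<in> c00T \<Longrightarrow> y \<in> c00T \<Longrightarrow> (\<lambda>\<eta>. x \<eta> + y \<eta>) \<in> c00T"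
  unfolding c00T_def
  by (auto intro: finite_subset[of _ "{\<eta>. x \<eta> \<noteq> 0} \<union> {\<eta>. y \<eta> \<noteq> 0}"])

lemma c00T_scale: "x \<in> c00T \<Longrightarrow> (\<lambda>\<eta>. c * x \<eta>) \<in> c00T"
  unfolding c00T_def by (auto elim: finite_subset[rotated])

lemma c00T_diff: "x \<in> c00T \<Longrightarrow> y \<in> c00T \<Longrightarrow> (\<lambda>\<eta>. x \<eta> - y \<eta>) \<in> c00T"
  using c00T_add[OF _ c00T_scale, of x y "-1"] by simp

lemma zvec_in_c00T: "\<eta> \<noteq> [] \<Longrightarrow> zvec \<eta> \<in> c00T"
  unfolding c00T_def zvec_def by auto

lemma indicator_combination_in_c00T:
  "finite A \<Longrightarrow> A \<subseteq> {\<eta>. \<eta> \<noteq> []} \<Longrightarrow> (\<lambda>\<xi>. if \<xi> \<in> A then a \<xi> else 0) \<in> c00T"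
  unfolding c00T_def by (auto elim: finite_subset[rotated])

lemma exists_level_bound: "x \<in> c00T \<Longrightarrow> \<exists>L. \<forall>\<eta>\<in>supp x. length \<eta> < L"
  using finite_nat_bounded[OF finite_imageI[OF finite_supp_if_c00T, of x length]] by auto

lemma normT_restrict_le:
  assumes "x \<in> c00T"
  shows "normT T (\<lambda>\<eta>. if \<eta> \<in> G then x \<eta> else 0) \<le> normT T x"
  unfolding normT_eq_SUP_branch_vec[of T "\<lambda>\<eta>. if \<eta> \<in> G then x \<eta> else 0"]
proof (rule cSUP_least)
  fix \<sigma>
  have "branch_vec \<sigma> (\<lambda>\<eta>. if \<eta> \<in> G then x \<eta> else 0)
      = (\<lambda>l. if l \<in> {l. map \<sigma> [0..<l] \<in> G} then branch_vec \<sigma> x l else 0)"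
    unfolding branch_vec_def by auto
  then have "normM (MT (Tsec T \<sigma>)) (branch_vec \<sigma> (\<lambda>\<eta>. if \<eta> \<in> G then x \<eta> else 0))
      \<le> normM (MT (Tsec T \<sigma>)) (branch_vec \<sigma> x)"
    using normM_restrict_le[OF branch_vec_in_c00N[OF assms], of "MT (Tsec T \<sigma>)" "{l. map \<sigma> [0..<l] \<in> G}"]
    by simp
  also have "\<dots> \<le> normT T x" by (rule normM_branch_vec_le_normT[OF assms])
  finally show "normM (MT (Tsec T \<sigma>)) (branch_vec \<sigma> (\<lambda>\<eta>. if \<eta> \<in> G then x \<eta> else 0))
      \<le> normT T x" .
qed simp

lemma supp_less_branch_vec: "levels_less x y \<Longrightarrow> supp_less (branch_vec \<sigma> x) (branch_vec \<sigma> y)"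
  unfolding levels_less_def supp_less_def supp_def branch_vec_def
  by (auto split: if_splits) (metis diff_zero length_map length_upt)

lemma normT_add_three_successive_le:
  assumes x: "x1 \<in> c00T" "x2 \<in> c00T" "x3 \<in> c00T"
    and succ: "levels_less x1 x2" "levels_less x2 x3" "levels_less x1 x3"
    and bound: "normT T x1 \<le> c" "normT T x2 \<le> c" "normT T x3 \<le> c"
  shows "normT T (\<lambda>\<eta>. x1 \<eta> + x2 \<eta> + x3 \<eta>) \<le> 2 * c"
  unfolding normT_eq_SUP_branch_vec
proof (rule cSUP_least)
  fix \<sigma>
  have "branch_vec \<sigma> (\<lambda>\<eta>. x1 \<eta> + x2 \<eta> + x3 \<eta>)
      = (\<lambda>l. branch_vec \<sigma> x1 l + branch_vec \<sigma> x2 l + branch_vec \<sigma> x3 l)"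
    unfolding branch_vec_def by auto
  moreover have "normM (MT (Tsec T \<sigma>)) (\<lambda>l. branch_vec \<sigma> x1 l + branch_vec \<sigma> x2 l + branch_vec \<sigma> x3 l)
      \<le> 2 * c"
    using order_trans[OF normM_branch_vec_le_normT[OF x(1)] bound(1)]
      order_trans[OF normM_branch_vec_le_normT[OF x(2)] bound(2)]
      order_trans[OF normM_branch_vec_le_normT[OF x(3)] bound(3)]
    by (intro normM_add_three_successive_le MT_covers_small_sets branch_vec_in_c00N
        supp_less_branch_vec x succ)
  ultimately show "normM (MT (Tsec T \<sigma>)) (branch_vec \<sigma> (\<lambda>\<eta>. x1 \<eta> + x2 \<eta> + x3 \<eta>)) \<le> 2 * c"
    by simp
qed simp

section \<open>The unit vector basis of \<open>E\<^sub>T\<close>\<close>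

lemma bounded_linear_if_dense:
  fixes g :: "'a::real_normed_vector \<Rightarrow> 'b::real_normed_vector"
  assumes dense: "closure X = UNIV" and cont: "continuous_on UNIV g"
    and add: "\<And>y z. y \<in> X \<Longrightarrow> z \<in> X \<Longrightarrow> g (y + z) = g y + g z"
    and scale: "\<And>c y. y \<in> X \<Longrightarrow> g (c *\<^sub>R y) = c *\<^sub>R g y"
    and bound: "\<And>y. y \<in> X \<Longrightarrow> norm (g y) \<le> norm y * K"
  shows "bounded_linear g"
proof (rule bounded_linear_intro)
  fix y z
  have "(\<lambda>p. g (fst p + snd p) - g (fst p) - g (snd p)) (y, z) = 0"
  proof (rule continuous_constant_on_closure[of "X \<times> X"])
    show "continuous_on (closure (X \<times> X)) (\<lambda>p. g (fst p + snd p) - g (fst p) - g (snd p))"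
      by (intro continuous_intros continuous_on_compose2[OF cont]) auto
  qed (use dense add in \<open>auto simp: closure_Times\<close>)
  then show "g (y + z) = g y + g z" by (simp add: algebra_simps)
next
  fix c y
  have "(\<lambda>y. g (c *\<^sub>R y) - c *\<^sub>R g y) y = 0"
  proof (rule continuous_constant_on_closure[of X])
    show "continuous_on (closure X) (\<lambda>y. g (c *\<^sub>R y) - c *\<^sub>R g y)"
      by (intro continuous_intros continuous_on_compose2[OF cont]) auto
  qed (use dense scale in auto)
  then show "g (c *\<^sub>R y) = c *\<^sub>R g y" by simp
next
  fix y
  have "closed {y. norm (g y) \<le> norm y * K}"
    by (intro closed_Collect_le continuous_intros continuous_on_compose2[OF cont]) auto
  then have "closure X \<subseteq> {y. norm (g y) \<le> norm y * K}"
    using bound by (intro closure_minimal) auto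
  then show "norm (g y) \<le> norm y * K" using dense by auto
qed

lemma exists_unit_vector_exceeding:
  fixes F :: "'a::real_normed_vector \<Rightarrow> real" and Q :: "'a \<Rightarrow> 'a"
  assumes F: "linear F" and Q: "linear Q" and y: "\<epsilon> * norm y < \<bar>F (Q y)\<bar>"
  shows "\<exists>u. norm u = 1 \<and> \<epsilon> < \<bar>F (Q u)\<bar>"
proof -
  have "y \<noteq> 0" using y linear_0[OF Q] linear_0[OF F] by auto
  moreover have "F (Q ((1 / norm y) *\<^sub>R y)) = F (Q y) / norm y"
    using linear_scale[OF Q] linear_scale[OF F] by simp
  ultimately show ?thesis
    using y by (intro exI[of _ "(1 / norm y) *\<^sub>R y"]) (simp add: pos_less_divide_eq mult.commute)
qed

locale normT_embedding =
  fixes T :: "(bool list \<times> nat list) set" and J :: "(bool list \<Rightarrow> real) \<Rightarrow> 'a::banach"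
  assumes J_add: "\<forall>x\<in>c00T. \<forall>y\<in>c00T. J (\<lambda>\<eta>. x \<eta> + y \<eta>) = J x + J y"
    and J_scale: "\<forall>x\<in>c00T. \<forall>c. J (\<lambda>\<eta>. c * x \<eta>) = c *\<^sub>R J x"
    and norm_J: "\<forall>x\<in>c00T. norm (J x) = normT T x"
    and dense_J: "closure (J ` c00T) = UNIV"
begin

lemma J_diff:
  assumes "x \<in> c00T" "y \<in> c00T"
  shows "J (\<lambda>\<eta>. x \<eta> - y \<eta>) = J x - J y"
  using J_add[rule_format, OF assms(1) c00T_scale[OF assms(2)], of "-1"]
    J_scale[rule_format, OF assms(2), of "-1"]
  by simp

lemma c00T_sum: "finite A \<Longrightarrow> \<forall>i\<in>A. f i \<in> c00T \<Longrightarrow> (\<lambda>\<eta>. \<Sum>i\<in>A. f i \<eta>) \<in> c00T"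
proof (induction A rule: finite_induct)
  case empty
  show ?case by (simp add: c00T_def)
next
  case (insert a A)
  then show ?case using c00T_add[of "f a" "\<lambda>\<eta>. \<Sum>i\<in>A. f i \<eta>"] by simp
qed

lemma J_sum: "finite A \<Longrightarrow> \<forall>i\<in>A. f i \<in> c00T \<Longrightarrow> J (\<lambda>\<eta>. \<Sum>i\<in>A. f i \<eta>) = (\<Sum>i\<in>A. J (f i))"
proof (induction A rule: finite_induct)
  case empty
  show ?case using J_scale[rule_format, of "\<lambda>_. 0" 0] by (simp add: c00T_def)
next
  case (insert a A)
  have "(\<lambda>\<eta>. \<Sum>i\<in>A. f i \<eta>) \<in> c00T" using insert.hyps(1) insert.prems by (intro c00T_sum) auto
  then show ?case using J_add[rule_format, of "f a" "\<lambda>\<eta>. \<Sum>i\<in>A. f i \<eta>"] insert by simp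
qed

lemma J_inj_on: "inj_on J c00T"
proof (rule inj_onI, rule ext)
  fix x y \<eta>
  assume x: "x \<in> c00T" and y: "y \<in> c00T" and "J x = J y"
  then have "normT T (\<lambda>\<eta>. x \<eta> - y \<eta>) = 0"
    using norm_J c00T_diff[OF x y] J_diff[OF x y] by force
  then show "x \<eta> = y \<eta>" using abs_le_normT[OF c00T_diff[OF x y], of \<eta> T] by simp
qed

lemma sum_zvec_eq_J:
  assumes "finite A" "A \<subseteq> {\<eta>. \<eta> \<noteq> []}"
  shows "(\<Sum>\<eta>\<in>A. a \<eta> *\<^sub>R J (zvec \<eta>)) = J (\<lambda>\<xi>. if \<xi> \<in> A then a \<xi> else 0)"
proof -
  have terms: "\<forall>\<eta>\<in>A. (\<lambda>\<xi>. a \<eta> * zvec \<eta> \<xi>) \<in> c00T"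
    using assms(2) zvec_in_c00T c00T_scale by blast
  have "(\<Sum>\<eta>\<in>A. a \<eta> *\<^sub>R J (zvec \<eta>)) = (\<Sum>\<eta>\<in>A. J (\<lambda>\<xi>. a \<eta> * zvec \<eta> \<xi>))"
    using J_scale zvec_in_c00T assms(2) by (intro sum.cong) auto
  also have "\<dots> = J (\<lambda>\<xi>. \<Sum>\<eta>\<in>A. a \<eta> * zvec \<eta> \<xi>)"
    by (rule J_sum[OF assms(1) terms, symmetric])
  also have "(\<lambda>\<xi>. \<Sum>\<eta>\<in>A. a \<eta> * zvec \<eta> \<xi>) = (\<lambda>\<xi>. \<Sum>\<eta>\<in>A. if \<xi> = \<eta> then a \<eta> else 0)"
    unfolding zvec_def by (intro ext sum.cong) auto
  also have "\<dots> = (\<lambda>\<xi>. if \<xi> \<in> A then a \<xi> else 0)"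
    using assms(1) by (simp add: sum.delta)
  finally show ?thesis .
qed

lemma one_unconditional_zvec: "one_unconditional (\<lambda>\<eta>. J (zvec \<eta>)) {\<eta>. \<eta> \<noteq> []}"
  unfolding one_unconditional_def
proof (intro allI impI)
  fix A B :: "bool list set" and a :: "bool list \<Rightarrow> real"
  assume B: "finite B" and AB: "A \<subseteq> B" and B_ne: "B \<subseteq> {\<eta>. \<eta> \<noteq> []}"
  define x where "x = (\<lambda>\<xi>. if \<xi> \<in> B then a \<xi> else 0)"
  have x: "x \<in> c00T" unfolding x_def by (rule indicator_combination_in_c00T[OF B B_ne])
  have restrict: "(\<lambda>\<xi>. if \<xi> \<in> A then a \<xi> else 0) = (\<lambda>\<xi>. if \<xi> \<in> A then x \<xi> else 0)"
    unfolding x_def using AB by (auto simp: fun_eq_iff)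
  have "norm (\<Sum>\<eta>\<in>A. a \<eta> *\<^sub>R J (zvec \<eta>)) = normT T (\<lambda>\<xi>. if \<xi> \<in> A then x \<xi> else 0)"
    using sum_zvec_eq_J[of A a] finite_subset[OF AB B] AB B_ne norm_J c00T_restrict[OF x]
    unfolding restrict by auto
  also have "\<dots> \<le> normT T x" by (rule normT_restrict_le[OF x])
  also have "\<dots> = norm (\<Sum>\<eta>\<in>B. a \<eta> *\<^sub>R J (zvec \<eta>))"
    unfolding sum_zvec_eq_J[OF B B_ne] x_def[symmetric] using norm_J x by simp
  finally show "norm (\<Sum>\<eta>\<in>A. a \<eta> *\<^sub>R J (zvec \<eta>)) \<le> norm (\<Sum>\<eta>\<in>B. a \<eta> *\<^sub>R J (zvec \<eta>))" .
qed

lemma far_out_witness_growth: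
  fixes F :: "'a \<Rightarrow> real"
  assumes F: "linear F"
    and base: "\<And>L. \<exists>z\<in>c00T. (\<forall>\<eta>\<in>supp z. L \<le> length \<eta>) \<and> norm (J z) \<le> 1 \<and> \<delta> \<le> F (J z)"
  shows "\<exists>z\<in>c00T. (\<forall>\<eta>\<in>supp z. L \<le> length \<eta>) \<and> norm (J z) \<le> 2 ^ j \<and> 3 ^ j * \<delta> \<le> F (J z)"
proof (induction j arbitrary: L)
  case 0
  then show ?case using base by simp
next
  case (Suc j)
  obtain z1 where z1: "z1 \<in> c00T" "\<forall>\<eta>\<in>supp z1. L \<le> length \<eta>"
      "norm (J z1) \<le> 2 ^ j" "3 ^ j * \<delta> \<le> F (J z1)"
    using Suc.IH by blast
  obtain L1 where L1: "\<forall>\<eta>\<in>supp z1. length \<eta> < L1" using exists_level_bound[OF z1(1)] by blast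
  obtain z2 where z2: "z2 \<in> c00T" "\<forall>\<eta>\<in>supp z2. max L L1 \<le> length \<eta>"
      "norm (J z2) \<le> 2 ^ j" "3 ^ j * \<delta> \<le> F (J z2)"
    using Suc.IH by blast
  obtain L2 where L2: "\<forall>\<eta>\<in>supp z2. length \<eta> < L2" using exists_level_bound[OF z2(1)] by blast
  obtain z3 where z3: "z3 \<in> c00T" "\<forall>\<eta>\<in>supp z3. max L (max L1 L2) \<le> length \<eta>"
      "norm (J z3) \<le> 2 ^ j" "3 ^ j * \<delta> \<le> F (J z3)"
    using Suc.IH by blast
  define z where "z = (\<lambda>\<eta>. z1 \<eta> + z2 \<eta> + z3 \<eta>)"
  have z12: "(\<lambda>\<eta>. z1 \<eta> + z2 \<eta>) \<in> c00T" by (rule c00T_add[OF z1(1) z2(1)])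
  have z: "z \<in> c00T" unfolding z_def using c00T_add[OF z12 z3(1)] by simp
  have J_z: "J z = J z1 + J z2 + J z3"
    using J_add[rule_format, OF z12 z3(1)] J_add[rule_format, OF z1(1) z2(1)] unfolding z_def by simp
  have "levels_less z1 z2" "levels_less z2 z3" "levels_less z1 z3"
    unfolding levels_less_def using L1 L2 z2(2) z3(2) by (meson le_less_trans max.bounded_iff not_less)+
  then have "normT T z \<le> 2 * 2 ^ j"
    unfolding z_def using z1 z2 z3 norm_J by (intro normT_add_three_successive_le) auto
  then have "norm (J z) \<le> 2 ^ Suc j" using norm_J z by simp
  moreover have "3 ^ Suc j * \<delta> \<le> F (J z)"
    using z1(4) z2(4) z3(4) unfolding J_z linear_add[OF F] by simp
  moreover have "\<forall>\<eta>\<in>supp z. L \<le> length \<eta>"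
    using z1(2) z2(2) z3(2) unfolding z_def supp_def by fastforce
  ultimately show ?case using z by blast
qed

lemma coordinate_functional_exists:
  "\<exists>g. bounded_linear g \<and> (\<forall>x\<in>c00T. g (J x) = x \<eta>)"
proof -
  define X where "X = J ` c00T"
  define f where "f = (\<lambda>y. the_inv_into c00T J y \<eta>)"
  have f_J: "f (J x) = x \<eta>" if "x \<in> c00T" for x
    unfolding f_def using the_inv_into_f_f[OF J_inj_on that] by simp
  have "1-lipschitz_on X f"
  proof (rule lipschitz_onI)
    fix y z assume "y \<in> X" "z \<in> X"
    then obtain x x' where x: "x \<in> c00T" "y = J x" and x': "x' \<in> c00T" "z = J x'"
      unfolding X_def by auto
    have "dist (f y) (f z) = \<bar>(\<lambda>\<xi>. x \<xi> - x' \<xi>) \<eta>\<bar>"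
      unfolding x x' f_J[OF x(1)] f_J[OF x'(1)] dist_real_def by simp
    also have "\<dots> \<le> normT T (\<lambda>\<xi>. x \<xi> - x' \<xi>)" by (rule abs_le_normT[OF c00T_diff[OF x(1) x'(1)]])
    also have "\<dots> = dist y z"
      using norm_J[rule_format, OF c00T_diff[OF x(1) x'(1)]] J_diff[OF x(1) x'(1)]
      unfolding x x' dist_norm by simp
    finally show "dist (f y) (f z) \<le> 1 * dist y z" by simp
  qed simp
  then obtain g where g_lip: "1-lipschitz_on (closure X) g" and g_f: "\<forall>y\<in>X. g y = f y"
    using lipschitz_extend_closure by blast
  have dense: "closure X = UNIV" unfolding X_def by (rule dense_J)
  have g_J: "g (J x) = x \<eta>" if "x \<in> c00T" for x
    using g_f f_J that unfolding X_def by auto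
  have "bounded_linear g"
  proof (rule bounded_linear_if_dense[OF dense])
    show "continuous_on UNIV g" using lipschitz_on_continuous_on[OF g_lip] dense by simp
    fix y z assume "y \<in> X" "z \<in> X"
    then show "g (y + z) = g y + g z"
      unfolding X_def using J_add g_J c00T_add by force
  next
    fix c y assume "y \<in> X"
    then show "g (c *\<^sub>R y) = c *\<^sub>R g y"
      unfolding X_def using J_scale g_J c00T_scale by force
  next
    fix y assume "y \<in> X"
    then show "norm (g y) \<le> norm y * 1"
      unfolding X_def using g_J abs_le_normT norm_J by auto
  qed
  then show ?thesis using g_J by blast
qed

definition coord :: "bool list \<Rightarrow> 'a \<Rightarrow> real" where
  "coord \<eta> = (SOME g. bounded_linear g \<and> (\<forall>x\<in>c00T. g (J x) = x \<eta>))"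

lemma
  shows bounded_linear_coord: "bounded_linear (coord \<eta>)"
    and coord_J: "x \<in> c00T \<Longrightarrow> coord \<eta> (J x) = x \<eta>"
  using someI_ex[OF coordinate_functional_exists[of \<eta>]] unfolding coord_def by auto

definition partial_sum :: "(nat \<Rightarrow> bool list) \<Rightarrow> nat \<Rightarrow> 'a \<Rightarrow> 'a" where
  "partial_sum e m y = (\<Sum>i<m. coord (e i) y *\<^sub>R J (zvec (e i)))"

lemma bounded_linear_partial_sum: "bounded_linear (partial_sum e m)"
  unfolding partial_sum_def
  by (intro bounded_linear_sum bounded_linear_compose[OF bounded_linear_scaleR_left]
      bounded_linear_coord)

context
  fixes e :: "nat \<Rightarrow> bool list"
  assumes e: "bij_betw e UNIV {\<eta>. \<eta> \<noteq> []}"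
begin

lemma enum_nonempty: "e n \<noteq> []"
  using e unfolding bij_betw_def by auto

lemma inj_enum: "inj e"
  using e unfolding bij_betw_def by auto

lemma enum_surj: "\<eta> \<noteq> [] \<Longrightarrow> \<exists>n. e n = \<eta>"
proof -
  assume "\<eta> \<noteq> []"
  then have "\<eta> \<in> range e" using bij_betw_imp_surj_on[OF e] by simp
  then show ?thesis by blast
qed

lemma partial_sum_J:
  assumes "x \<in> c00T"
  shows "partial_sum e m (J x) = J (\<lambda>\<xi>. if \<xi> \<in> e ` {..<m} then x \<xi> else 0)"
proof -
  have "partial_sum e m (J x) = (\<Sum>i<m. x (e i) *\<^sub>R J (zvec (e i)))"
    unfolding partial_sum_def using coord_J[OF assms] by simp
  also have "\<dots> = (\<Sum>\<eta>\<in>e ` {..<m}. x \<eta> *\<^sub>R J (zvec \<eta>))"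
    using sum.reindex[OF inj_on_subset[OF inj_enum subset_UNIV], of "\<lambda>\<eta>. x \<eta> *\<^sub>R J (zvec \<eta>)" "{..<m}"]
    by (simp add: o_def)
  also have "\<dots> = J (\<lambda>\<xi>. if \<xi> \<in> e ` {..<m} then x \<xi> else 0)"
    by (rule sum_zvec_eq_J) (use enum_nonempty in auto)
  finally show ?thesis .
qed

lemma norm_partial_sum_le: "norm (partial_sum e m y) \<le> norm y"
proof -
  have "continuous_on UNIV (partial_sum e m)"
    by (rule linear_continuous_on[OF bounded_linear_partial_sum])
  then have "closed {y. norm (partial_sum e m y) \<le> norm y}"
    by (intro closed_Collect_le continuous_on_norm continuous_on_id)
  moreover have "J x \<in> {y. norm (partial_sum e m y) \<le> norm y}" if x: "x \<in> c00T" for x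
    using partial_sum_J[OF x] norm_J c00T_restrict[OF x] normT_restrict_le[OF x] x by simp
  ultimately have "closure (J ` c00T) \<subseteq> {y. norm (partial_sum e m y) \<le> norm y}"
    by (intro closure_minimal) auto
  then show ?thesis using dense_J by auto
qed

lemma partial_sum_J_eventually: "x \<in> c00T \<Longrightarrow> \<exists>M. \<forall>m\<ge>M. partial_sum e m (J x) = J x"
proof -
  assume x: "x \<in> c00T"
  obtain M where M: "e -` supp x \<subseteq> {..<M}"
    using finite_nat_bounded[OF finite_vimageI[OF finite_supp_if_c00T[OF x] inj_enum]] by blast
  have "(\<lambda>\<xi>. if \<xi> \<in> e ` {..<m} then x \<xi> else 0) = x" if "m \<ge> M" for m
  proof
    fix \<xi>
    show "(if \<xi> \<in> e ` {..<m} then x \<xi> else 0) = x \<xi>"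
    proof (cases "x \<xi> = 0")
      case False
      then have "\<xi> \<noteq> []" using x unfolding c00T_def by auto
      then obtain n where n: "e n = \<xi>" using enum_surj by blast
      then have "n < m" using M that False unfolding supp_def by auto
      then show ?thesis using n by auto
    qed simp
  qed
  then show ?thesis using partial_sum_J[OF x] by metis
qed

lemma partial_sum_tendsto: "(\<lambda>m. partial_sum e m y) \<longlonglongrightarrow> y"
proof (rule LIMSEQ_I)
  fix r :: real assume "r > 0"
  then obtain x where x: "x \<in> c00T" "dist (J x) y < r / 2"
    using dense_J closure_approachable[of y "J ` c00T"] by (metis half_gt_zero image_iff UNIV_I)
  obtain M where M: "\<forall>m\<ge>M. partial_sum e m (J x) = J x"
    using partial_sum_J_eventually[OF x(1)] by blast
  have "norm (partial_sum e m y - y) < r" if "m \<ge> M" for m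
  proof -
    have "partial_sum e m (y - J x) = partial_sum e m y - J x"
      using linear_diff[OF bounded_linear.linear[OF bounded_linear_partial_sum]] M that by simp
    then have "partial_sum e m y - y = partial_sum e m (y - J x) + (J x - y)"
      by (simp add: algebra_simps)
    then have "norm (partial_sum e m y - y) \<le> norm (y - J x) + norm (J x - y)"
      using norm_triangle_ineq[of "partial_sum e m (y - J x)" "J x - y"] norm_partial_sum_le
      by (smt (verit))
    also have "\<dots> < r" using x(2) by (simp add: dist_norm norm_minus_commute)
    finally show ?thesis .
  qed
  then show "\<exists>M. \<forall>m\<ge>M. norm (partial_sum e m y - y) < r" by blast
qed

lemma coord_zvec: "coord (e n) (J (zvec (e i))) = (if i = n then 1 else 0)"
  using coord_J[OF zvec_in_c00T[OF enum_nonempty]] inj_enum unfolding zvec_def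
  by (auto dest: injD)

lemma expansion_unique:
  assumes "(\<lambda>m. \<Sum>i<m. a i *\<^sub>R J (zvec (e i))) \<longlonglongrightarrow> y"
  shows "a = (\<lambda>n. coord (e n) y)"
proof
  fix k
  have "coord (e k) (\<Sum>i<m. a i *\<^sub>R J (zvec (e i))) = (if k < m then a k else 0)" for m
  proof -
    have "coord (e k) (\<Sum>i<m. a i *\<^sub>R J (zvec (e i))) = (\<Sum>i<m. coord (e k) (a i *\<^sub>R J (zvec (e i))))"
      by (rule linear_sum[OF bounded_linear.linear[OF bounded_linear_coord]])
    also have "\<dots> = (\<Sum>i<m. a i * coord (e k) (J (zvec (e i))))"
      using linear_scale[OF bounded_linear.linear[OF bounded_linear_coord]] by simp
    also have "\<dots> = (\<Sum>i<m. if i = k then a i else 0)"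
      unfolding coord_zvec by (intro sum.cong) auto
    finally show ?thesis by (simp add: sum.delta')
  qed
  then have "(\<lambda>m. if k < m then a k else 0) \<longlonglongrightarrow> coord (e k) y"
    using bounded_linear.tendsto[OF bounded_linear_coord[of "e k"] assms] by simp
  moreover have "(\<lambda>m. if k < m then a k else 0) \<longlonglongrightarrow> a k"
    by (rule tendsto_eventually, rule eventually_sequentiallyI[of "Suc k"]) auto
  ultimately show "a k = coord (e k) y" using LIMSEQ_unique by blast
qed

lemma schauder_basis_zvec: "schauder_basis (\<lambda>n. J (zvec (e n)))"
  unfolding schauder_basis_def
proof (intro allI ex1I)
  fix y
  show "(\<lambda>m. \<Sum>i<m. coord (e i) y *\<^sub>R J (zvec (e i))) \<longlonglongrightarrow> y"
    using partial_sum_tendsto unfolding partial_sum_def .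
qed (rule expansion_unique)

lemma basis_coef_zvec: "basis_coef (\<lambda>n. J (zvec (e n))) n = coord (e n)"
proof
  fix y
  have "(THE a. (\<lambda>m. \<Sum>i<m. a i *\<^sub>R J (zvec (e i))) \<longlonglongrightarrow> y) = (\<lambda>n. coord (e n) y)"
  proof (rule the_equality)
    show "(\<lambda>m. \<Sum>i<m. coord (e i) y *\<^sub>R J (zvec (e i))) \<longlonglongrightarrow> y"
      using partial_sum_tendsto unfolding partial_sum_def .
  qed (rule expansion_unique)
  then show "basis_coef (\<lambda>n. J (zvec (e n))) n y = coord (e n) y"
    unfolding basis_coef_def by simp
qed

lemma enum_eventually_long: "\<exists>M. \<forall>i\<ge>M. L \<le> length (e i)"
proof -
  have "finite {\<eta>::bool list. length \<eta> < L}"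
    by (rule finite_subset[OF _ finite_lists_length_le[of "UNIV :: bool set" L]]) auto
  then obtain M where M: "e -` {\<eta>. length \<eta> < L} \<subseteq> {..<M}"
    using finite_nat_bounded[OF finite_vimageI[OF _ inj_enum]] by blast
  have "L \<le> length (e i)" if "M \<le> i" for i
  proof (rule ccontr)
    assume "\<not> L \<le> length (e i)"
    then have "i \<in> e -` {\<eta>. length \<eta> < L}" by simp
    then show False using M that by auto
  qed
  then show ?thesis by blast
qed

lemma tail_approx:
  assumes "\<delta> > 0" and long: "\<forall>i\<ge>m. L \<le> length (e i)"
  shows "\<exists>z\<in>c00T. (\<forall>\<eta>\<in>supp z. L \<le> length \<eta>) \<and> norm (J z - (y - partial_sum e m y)) < \<delta>"
proof -
  have "y \<in> closure (J ` c00T)" using dense_J by simp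
  then obtain x where x: "x \<in> c00T" "dist (J x) y < \<delta> / 2"
    using closure_approachable[of y "J ` c00T"] half_gt_zero[OF assms(1)] by blast
  define z where "z = (\<lambda>\<xi>. if \<xi> \<in> - e ` {..<m} then x \<xi> else 0)"
  have head: "(\<lambda>\<xi>. if \<xi> \<in> e ` {..<m} then x \<xi> else 0) \<in> c00T" by (rule c00T_restrict[OF x(1)])
  have "z = (\<lambda>\<xi>. x \<xi> - (if \<xi> \<in> e ` {..<m} then x \<xi> else 0))" unfolding z_def by auto
  then have "J z = J x - partial_sum e m (J x)"
    using J_diff[OF x(1) head] partial_sum_J[OF x(1)] by simp
  then have "J z - (y - partial_sum e m y) = (J x - y) - partial_sum e m (J x - y)"
    using linear_diff[OF bounded_linear.linear[OF bounded_linear_partial_sum]]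
    by (simp add: algebra_simps)
  then have "norm (J z - (y - partial_sum e m y)) \<le> norm (J x - y) + norm (partial_sum e m (J x - y))"
    using norm_triangle_ineq4 by metis
  also have "\<dots> \<le> 2 * norm (J x - y)" using norm_partial_sum_le by simp
  also have "\<dots> < \<delta>" using x(2) by (simp add: dist_norm)
  finally have "norm (J z - (y - partial_sum e m y)) < \<delta>" .
  moreover have "z \<in> c00T" unfolding z_def by (rule c00T_restrict[OF x(1)])
  moreover have "L \<le> length \<eta>" if "\<eta> \<in> supp z" for \<eta>
  proof -
    have "x \<eta> \<noteq> 0" "\<eta> \<notin> e ` {..<m}" using that unfolding z_def supp_def by (auto split: if_splits)
    moreover have "\<eta> \<noteq> []" using x(1) \<open>x \<eta> \<noteq> 0\<close> unfolding c00T_def by auto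
    ultimately obtain n where "e n = \<eta>" "m \<le> n" using enum_surj by force
    then show ?thesis using long by auto
  qed
  ultimately show ?thesis by blast
qed

lemma far_out_witness:
  fixes F :: "'a \<Rightarrow> real"
  assumes F: "bounded_linear F" and "\<epsilon> > 0"
    and bad: "\<forall>M. \<exists>m\<ge>M. \<exists>y. \<epsilon> * norm y < \<bar>F (y - partial_sum e m y)\<bar>"
  shows "\<exists>z\<in>c00T. (\<forall>\<eta>\<in>supp z. L \<le> length \<eta>) \<and> norm (J z) \<le> 1 \<and> \<epsilon> / 6 \<le> F (J z)"
proof -
  have F_lin: "linear F" and P_lin: "linear (partial_sum e m)" for m
    using F bounded_linear_partial_sum by (auto intro: bounded_linear.linear)
  obtain K where K: "K > 0" "\<And>v. norm (F v) \<le> norm v * K"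
    using bounded_linear.pos_bounded[OF F] by blast
  obtain M where M: "\<forall>i\<ge>M. L \<le> length (e i)" using enum_eventually_long by blast
  obtain m y where m: "m \<ge> M" and y: "\<epsilon> * norm y < \<bar>F (y - partial_sum e m y)\<bar>"
    using bad by blast
  have "linear (\<lambda>v. v - partial_sum e m v)"
    using P_lin by (simp add: linear_compose_sub linear_ident)
  then obtain u where u: "norm u = 1" "\<epsilon> < \<bar>F (u - partial_sum e m u)\<bar>"
    using exists_unit_vector_exceeding[OF F_lin, of "\<lambda>v. v - partial_sum e m v"] y by blast
  define w where "w = u - partial_sum e m u"
  have norm_w: "norm w \<le> 2"
    using norm_triangle_ineq4[of u "partial_sum e m u"] norm_partial_sum_le[of m u] u(1)
    unfolding w_def by simp
  define \<delta> where "\<delta> = min 1 (\<epsilon> / (2 * K))"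
  have "\<delta> > 0" unfolding \<delta>_def using \<open>\<epsilon> > 0\<close> K by simp
  moreover have "\<forall>i\<ge>m. L \<le> length (e i)" using M m by auto
  ultimately obtain z0 where z0: "z0 \<in> c00T" "\<forall>\<eta>\<in>supp z0. L \<le> length \<eta>" "norm (J z0 - w) < \<delta>"
    using tail_approx[of \<delta> m L u] unfolding w_def by blast
  have "\<bar>F (J z0) - F w\<bar> \<le> norm (J z0 - w) * K"
    using K(2)[of "J z0 - w"] linear_diff[OF F_lin] by simp
  also have "\<dots> \<le> \<delta> * K" using z0(3) K(1) by simp
  also have "\<dots> \<le> \<epsilon> / (2 * K) * K" unfolding \<delta>_def using K(1) by (intro mult_right_mono) auto
  also have "\<dots> = \<epsilon> / 2" using K(1) by simp
  finally have F_z0: "\<epsilon> / 2 < \<bar>F (J z0)\<bar>" using u(2) unfolding w_def by linarith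
  have norm_z0: "norm (J z0) \<le> 3"
    using norm_triangle_ineq2[of "J z0" w] z0(3) norm_w unfolding \<delta>_def by linarith
  define s where "s = sgn (F (J z0)) / 3"
  have J_sz0: "J (\<lambda>\<eta>. s * z0 \<eta>) = s *\<^sub>R J z0" using J_scale z0(1) by simp
  have F_sz0: "F (J (\<lambda>\<eta>. s * z0 \<eta>)) = \<bar>F (J z0)\<bar> / 3"
    unfolding J_sz0 linear_scale[OF F_lin] by (simp add: s_def abs_sgn)
  have "norm (J (\<lambda>\<eta>. s * z0 \<eta>)) \<le> 1"
    unfolding J_sz0 using norm_z0 by (simp add: s_def abs_sgn_eq)
  moreover have "\<epsilon> / 6 \<le> F (J (\<lambda>\<eta>. s * z0 \<eta>))" using F_sz0 F_z0 by simp
  moreover have "\<forall>\<eta>\<in>supp (\<lambda>\<eta>. s * z0 \<eta>). L \<le> length \<eta>" using z0(2) by (simp add: supp_def)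
  ultimately show ?thesis using c00T_scale[OF z0(1)] by blast
qed

lemma tail_functional_small:
  fixes F :: "'a \<Rightarrow> real"
  assumes F: "bounded_linear F" and "\<epsilon> > 0"
  shows "\<exists>M. \<forall>m\<ge>M. \<forall>y. \<bar>F (y - partial_sum e m y)\<bar> \<le> \<epsilon> * norm y"
proof (rule ccontr)
  assume "\<not> ?thesis"
  then have "\<forall>M. \<exists>m\<ge>M. \<exists>y. \<epsilon> * norm y < \<bar>F (y - partial_sum e m y)\<bar>" by (auto simp: not_le)
  note witness = far_out_witness[OF F \<open>\<epsilon> > 0\<close> this]
  obtain K where K: "K > 0" "\<And>v. norm (F v) \<le> norm v * K"
    using bounded_linear.pos_bounded[OF F] by blast
  have "3 ^ j * (\<epsilon> / 6) \<le> K * 2 ^ j" for j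
  proof -
    obtain z where "norm (J z) \<le> 2 ^ j" "3 ^ j * (\<epsilon> / 6) \<le> F (J z)"
      using far_out_witness_growth[OF bounded_linear.linear[OF F] witness, of 0 j] by blast
    then show ?thesis using K by (smt (verit) mult.commute mult_right_mono real_norm_def)
  qed
  then have "(3 / 2) ^ j \<le> K / (\<epsilon> / 6)" for j
    using \<open>\<epsilon> > 0\<close> by (simp add: power_divide field_simps)
  moreover obtain j where "K / (\<epsilon> / 6) < (3 / 2 :: real) ^ j" using real_arch_pow[of "3 / 2"] by auto
  ultimately show False by (meson not_le)
qed

lemma shrinking_zvec: "shrinking (\<lambda>n. J (zvec (e n)))"
  unfolding shrinking_def basis_coef_zvec
proof (intro conjI allI)
  fix n
  show "bounded_linear (coord (e n))" by (rule bounded_linear_coord)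
next
  let ?S = "span (range (\<lambda>n. Blinfun (coord (e n))))"
  have "f \<in> closure ?S" for f :: "'a \<Rightarrow>\<^sub>L real"
  proof -
    define F where "F = blinfun_apply f"
    have F_lin: "linear F" unfolding F_def by (rule bounded_linear.linear[OF blinfun.bounded_linear_right])
    define G where "G m = (\<Sum>i<m. F (J (zvec (e i))) *\<^sub>R Blinfun (coord (e i)))" for m
    have G_in_span: "G m \<in> ?S" for m
      unfolding G_def by (intro span_sum span_scale span_base) auto
    have G_apply: "blinfun_apply (G m) y = F (partial_sum e m y)" for m y
      unfolding G_def partial_sum_def blinfun.sum_left linear_sum[OF F_lin]
      by (simp add: scaleR_blinfun.rep_eq bounded_linear_Blinfun_apply[OF bounded_linear_coord]
          linear_scale[OF F_lin] mult.commute)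
    have "G \<longlonglongrightarrow> f"
    proof (rule LIMSEQ_I)
      fix r :: real assume "r > 0"
      then obtain M where M: "\<forall>m\<ge>M. \<forall>y. \<bar>F (y - partial_sum e m y)\<bar> \<le> r / 2 * norm y"
        using tail_functional_small[OF _ half_gt_zero[OF \<open>r > 0\<close>], of F]
          blinfun.bounded_linear_right unfolding F_def by blast
      have "norm (G m - f) \<le> r / 2" if "m \<ge> M" for m
      proof (rule norm_blinfun_bound)
        fix y
        have "blinfun_apply (G m - f) y = - F (y - partial_sum e m y)"
          using G_apply linear_diff[OF F_lin] unfolding F_def by (simp add: minus_blinfun.rep_eq)
        then show "norm (blinfun_apply (G m - f) y) \<le> r / 2 * norm y" using M that by simp
      qed (use \<open>r > 0\<close> in simp)
      then show "\<exists>M. \<forall>m\<ge>M. norm (G m - f) < r" using \<open>r > 0\<close> by force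
    qed
    then show ?thesis unfolding closure_sequential using G_in_span by blast
  qed
  then show "closure ?S = UNIV" by auto
qed

end

end

text \<open>The argument uses only that every set of at most three positive integers is admissible.\<close>
theorem lemma5p5:
  fixes T :: "(bool list \<times> nat list) set"
    and J :: "(bool list \<Rightarrow> real) \<Rightarrow> 'a::banach"
  assumes "tree2N T"
    and "\<forall>x\<in>c00T. \<forall>y\<in>c00T. J (\<lambda>\<eta>. x \<eta> + y \<eta>) = J x + J y"
    and "\<forall>x\<in>c00T. \<forall>c. J (\<lambda>\<eta>. c * x \<eta>) = c *\<^sub>R J x"
    and "\<forall>x\<in>c00T. norm (J x) = normT T x"
    and "closure (J ` c00T) = UNIV"
  shows "one_unconditional (\<lambda>\<eta>. J (zvec \<eta>)) {\<eta>. \<eta> \<noteq> []}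
    \<and> (\<forall>e. bij_betw e (UNIV :: nat set) {\<eta>. \<eta> \<noteq> []} \<longrightarrow>
          schauder_basis (\<lambda>n. J (zvec (e n))) \<and> shrinking (\<lambda>n. J (zvec (e n))))"
proof -
  interpret normT_embedding T J
    using assms(2-5) by unfold_locales
  show ?thesis
    using one_unconditional_zvec schauder_basis_zvec shrinking_zvec by blast
qed

end
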